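(* Let $p>3$ be a prime, $q=p^h$, and $a,b\in\mathbb{F}_{q^2}^*$. Suppose that $f_{a,b}(X)=X(1+aX^{q(q-1)}+bX^{2(q-1)})$ is a permutation polynomial of $\mathbb{F}_{q^2}$, that $N_{a,b}(X)$ and $D_{a,b}(X)$ have no nonconstant common factor, and that there exist $A,B,C\in\overline{\mathbb{F}_q}$ such that $$F_{a,b}(X,Y)=-b(XY+AX+BY+C)(XY+BX+AY+C).$$ Then $b=-a^{q-1}/3$ and $3a^{q+1}(4-9a^{q+1})\in\square_q^*$.
   Context: A polynomial $f\in\mathbb{F}_{q^2}[X]$ is a permutation polynomial of $\mathbb{F}_{q^2}$ if $x\mapsto f(x)$ is a bijection of $\mathbb{F}_{q^2}$. $N_{a,b}(X)=a^qX^3+X^2+b^q$, $D_{a,b}(X)=bX^3+X+a$, and $$F_{a,b}(X,Y)=\frac{N_{a,b}(X)D_{a,b}(Y)-N_{a,b}(Y)D_{a,b}(X)}{X-Y}\in\mathbb{F}_{q^2}[X,Y].$$ $\square_q^*$ denotes the set of nonzero squares of $\mathbb{F}_q$. *)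

theory Defs
  imports "HOL-Algebra.Algebraic_Closure_Type"
begin

definition perm_poly :: "'a::field poly \<Rightarrow> bool" where
  "perm_poly P \<longleftrightarrow> bij (poly P)"

definition f_ab :: "nat \<Rightarrow> 'a::field \<Rightarrow> 'a \<Rightarrow> 'a poly" where
  "f_ab q a b = [:0, 1:] * (1 + monom a (q * (q - 1)) + monom b (2 * (q - 1)))"

definition N_ab :: "nat \<Rightarrow> 'a::field \<Rightarrow> 'a \<Rightarrow> 'a poly" where
  "N_ab q a b = [:b ^ q, 0, 1, a ^ q:]"

definition D_ab :: "'a::field \<Rightarrow> 'a \<Rightarrow> 'a poly" where
  "D_ab a b = [:a, 1, 0, b:]"

text \<open>Bivariate polynomials are represented as 'k poly poly: the outer variable is Y,
  the inner variable is X.\<close>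
definition liftX :: "'k::comm_ring_1 poly \<Rightarrow> 'k poly poly" where
  "liftX P = [:P:]"

definition liftY :: "'k::comm_ring_1 poly \<Rightarrow> 'k poly poly" where
  "liftY P = map_poly (\<lambda>c. [:c:]) P"

definition varX :: "'k::comm_ring_1 poly poly" where
  "varX = [:[:0, 1:]:]"

definition varY :: "'k::comm_ring_1 poly poly" where
  "varY = [:0, 1:]"

definition F_ab :: "nat \<Rightarrow> 'a::field \<Rightarrow> 'a \<Rightarrow> 'a alg_closure poly poly" where
  "F_ab q a b =
     (let N = map_poly to_ac (N_ab q a b); D = map_poly to_ac (D_ab a b) in
      (liftX N * liftY D - liftY N * liftX D) div (varX - varY))"

text \<open>Nonzero squares of the subfield F_q = {x. x^q = x} of the ambient field.\<close>
definition nonzero_squares_q :: "nat \<Rightarrow> 'a::field set" where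
  "nonzero_squares_q q = {v. v \<noteq> 0 \<and> (\<exists>y. y ^ q = y \<and> y ^ 2 = v)}"

end

theory Submission
  imports Defs
begin

text \<open>Comparing coefficients in the factorisation of \<open>F\<^sub>a\<^sub>,\<^sub>b\<close> expresses \<open>A + B\<close>, \<open>AB\<close>
  and \<open>C\<close> through \<open>a\<close> and \<open>b\<close>; eliminating them leaves two relations between \<open>a\<close> and \<open>b\<close>,
  which together with the coprimality of \<open>N\<close> and \<open>D\<close> force \<open>b = -a^(q-1)/3\<close> and
  \<open>9a^(q+1) \<noteq> 4\<close>. Then \<open>A, B = a(3 \<plusminus> s)/2\<close> and \<open>C = a^(1-q)\<close> with
  \<open>3a^(q+1) s^2 = 4 - 9a^(q+1)\<close>. If \<open>3a^(q+1)(4 - 9a^(q+1))\<close> were not a square in \<open>\<bbbF>\<^sub>q\<close>,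
  then \<open>s^q = -s\<close>, and the Moebius map \<open>y \<mapsto> -(Ay + C)/(y + B)\<close> would preserve the group
  \<open>\<mu>\<^sub>q\<^sub>+\<^sub>1\<close> of \<open>(q+1)\<close>-th roots of unity. A point \<open>y = x^(q-1)\<close> not fixed by it and its
  image \<open>y'\<close> satisfy \<open>N(y)D(y') = N(y')D(y)\<close>; since \<open>f\<^sub>a\<^sub>,\<^sub>b(x) = x D(y)/y\<close> for \<open>x \<noteq> 0\<close>,
  this yields \<open>x' \<noteq> x\<close> with \<open>f\<^sub>a\<^sub>,\<^sub>b(x') = f\<^sub>a\<^sub>,\<^sub>b(x)\<close>.\<close>

section \<open>Finite fields\<close>

text \<open>The library's \<open>finite_field_power_card_eq_same\<close> needs the sort \<open>finite_field\<close>.\<close>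
lemma power_card_UNIV_eq_self:
  fixes x :: "'a::{field,finite}"
  shows "x ^ card (UNIV :: 'a set) = x"
proof (cases "x = 0")
  case False
  let ?R = "ring_of_type_algebra :: 'a ring"
  interpret field ?R by (rule field_from_type_algebra)
  have pow: "y [^]\<^bsub>?R\<^esub> n = y ^ n" for y :: 'a and n
    by (induction n) (simp_all add: ring_of_type_algebra_def)
  have "Units ?R = UNIV - {0}"
    by (simp add: field_Units) (simp add: ring_of_type_algebra_def)
  with False have "x ^ card (UNIV - {0::'a}) = 1"
    using units_power_order_eq_one[of x] by (simp add: pow) (simp add: ring_of_type_algebra_def)
  then show ?thesis
    by (metis card_Diff_singleton finite UNIV_I Suc_diff_1 finite_UNIV_card_ge_0 power_Suc mult_1_right)
qed (simp add: finite_UNIV_card_ge_0)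

lemma of_nat_card_UNIV_eq_0: "of_nat (card (UNIV :: 'a::{comm_ring_1,finite} set)) = (0::'a)"
proof -
  have "(\<Sum>y\<in>(UNIV::'a set). y + 1) = (\<Sum>y\<in>UNIV. y)"
    by (rule sum.reindex_bij_witness[of _ "\<lambda>y. y - 1" "\<lambda>y. y + 1"]) auto
  then show ?thesis
    by (simp add: sum.distrib)
qed

lemma card_power_eq_le:
  fixes c :: "'k::field"
  assumes "n > 0"
  shows "card {x. x ^ n = c} \<le> n"
proof -
  let ?P = "monom 1 n + [:-c:]"
  have deg: "degree ?P = n"
    using assms by (subst degree_add_eq_left) (simp_all add: degree_monom_eq)
  then have "card {x. poly ?P x = 0} \<le> n"
    using assms card_poly_roots_bound[of ?P] by fastforce
  moreover have "{x. poly ?P x = 0} = {x. x ^ n = c}"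
    by (auto simp: poly_monom)
  ultimately show ?thesis by simp
qed

lemma card_le_mult_card_image:
  assumes "finite A" and "\<And>y. card {x \<in> A. f x = y} \<le> k"
  shows "card A \<le> k * card (f ` A)"
proof -
  have "card A \<le> card (\<Union>y\<in>f ` A. {x \<in> A. f x = y})"
    using assms(1) by (intro card_mono) auto
  also have "\<dots> \<le> (\<Sum>y\<in>f ` A. card {x \<in> A. f x = y})"
    using assms(1) by (intro card_UN_le) auto
  also have "\<dots> \<le> (\<Sum>y\<in>f ` A. k)"
    using assms(2) by (intro sum_mono)
  also have "\<dots> = k * card (f ` A)"
    by simp
  finally show ?thesis .
qed

lemma nonzero_squares_eq_roots_of_unity:
  assumes card: "card (UNIV :: 'a::{field,finite} set) = Suc (2 * m)"
  shows "(\<lambda>x. x ^ 2) ` (UNIV - {0}) = {x :: 'a. x ^ m = 1}"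
proof -
  define R where "R = {x :: 'a. x ^ m = 1}"
  have "card {0 :: 'a, 1} \<le> card (UNIV :: 'a set)"
    by (rule card_mono) simp_all
  then have "m > 0"
    using card by simp
  have squares_in_R: "(\<lambda>x. x ^ 2) ` (UNIV - {0}) \<subseteq> R"
  proof
    fix y assume "y \<in> (\<lambda>x :: 'a. x ^ 2) ` (UNIV - {0})"
    then obtain x where "x \<noteq> 0" and y: "y = x ^ 2" by auto
    have "x * (x ^ 2) ^ m = x * 1"
      using power_card_UNIV_eq_self [of x] unfolding card by (simp add: power_mult)
    with \<open>x \<noteq> 0\<close> show "y \<in> R"
      unfolding R_def y by simp
  qed
  have "card {x \<in> UNIV - {0}. x ^ 2 = y} \<le> 2" for y :: 'a
  proof -
    have "card {x \<in> UNIV - {0}. x ^ 2 = y} \<le> card {x. x ^ 2 = y}"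
      by (intro card_mono) auto
    also have "\<dots> \<le> 2"
      by (rule card_power_eq_le) simp
    finally show ?thesis .
  qed
  then have "2 * m \<le> 2 * card ((\<lambda>x :: 'a. x ^ 2) ` (UNIV - {0}))"
    using card_le_mult_card_image [of "UNIV - {0::'a}" "\<lambda>x. x ^ 2" 2] card
    by (simp add: card_Diff_singleton)
  moreover have "card R \<le> m"
    unfolding R_def using \<open>m > 0\<close> by (rule card_power_eq_le)
  moreover have "card ((\<lambda>x :: 'a. x ^ 2) ` (UNIV - {0})) \<le> card R"
    using squares_in_R by (intro card_mono) simp_all
  ultimately show ?thesis
    unfolding R_def [symmetric] using squares_in_R by (intro card_subset_eq) simp_all
qed

lemma no_common_root_if_coprime:
  fixes P Q :: "'k::field poly"
  assumes "\<forall>g. g dvd P \<and> g dvd Q \<longrightarrow> degree g = 0" and "poly P z = 0" and "poly Q z = 0"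
  shows False
proof -
  from assms(2,3) have "[:- z, 1:] dvd P" and "[:- z, 1:] dvd Q"
    by (simp_all add: poly_eq_0_iff_dvd)
  with assms(1) show False
    by fastforce
qed

section \<open>The cross difference of \<open>N\<close> and \<open>D\<close>\<close>

lemma poly_N_ab: "poly (N_ab q a b) z = a ^ q * z ^ 3 + z ^ 2 + b ^ q"
  by (simp add: N_ab_def algebra_simps power2_eq_square power3_eq_cube)

lemma poly_D_ab: "poly (D_ab a b) z = b * z ^ 3 + z + a"
  by (simp add: D_ab_def algebra_simps power2_eq_square power3_eq_cube)

text \<open>The coefficient conditions for
  \<open>N(X)D(Y) - N(Y)D(X) = (X - Y)(-d3)(XY + AX + BY + C)(XY + BX + AY + C)\<close>,
  where \<open>N = n3 X^3 + X^2 + n0\<close> and \<open>D = d3 X^3 + X + d0\<close>.\<close>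
definition factorization_coeffs :: "'k::field \<Rightarrow> 'k \<Rightarrow> 'k \<Rightarrow> 'k \<Rightarrow> 'k \<Rightarrow> 'k \<Rightarrow> 'k \<Rightarrow> bool" where
  "factorization_coeffs n0 n3 d0 d3 A B C \<longleftrightarrow>
     n0 = d3 * C ^ 2 \<and> d0 = - d3 * (A + B) * C \<and> n3 = - d3 * (A + B) \<and>
     n3 * d0 - n0 * d3 = - d3 * A * B \<and> n3 * d0 - n0 * d3 + 1 = - d3 * (2 * C + A ^ 2 + B ^ 2)"

lemma cross_difference_div:
  fixes n0 n3 d0 d3 :: "'k::field"
  shows "(liftX [:n0, 0, 1, n3:] * liftY [:d0, 1, 0, d3:] - liftY [:n0, 0, 1, n3:] * liftX [:d0, 1, 0, d3:])
           div (varX - varY)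
       = [:[:- n0, d0, n3 * d0 - n0 * d3:], [:d0, n3 * d0 - n0 * d3 + 1, n3:],
           [:n3 * d0 - n0 * d3, n3, - d3:]:]"
proof -
  have "liftX [:n0, 0, 1, n3:] * liftY [:d0, 1, 0, d3:] - liftY [:n0, 0, 1, n3:] * liftX [:d0, 1, 0, d3:]
      = (varX - varY) * [:[:- n0, d0, n3 * d0 - n0 * d3:], [:d0, n3 * d0 - n0 * d3 + 1, n3:],
           [:n3 * d0 - n0 * d3, n3, - d3:]:]"
    by (simp add: liftX_def liftY_def varX_def varY_def map_poly_pCons algebra_simps)
  moreover have "varX - varY \<noteq> (0 :: 'k poly poly)"
    by (simp add: varX_def varY_def)
  ultimately show ?thesis
    by (metis nonzero_mult_div_cancel_left)
qed

lemma factorization_imp_coeffs: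
  fixes n0 n3 d0 d3 A B C :: "'k::field"
  assumes "(liftX [:n0, 0, 1, n3:] * liftY [:d0, 1, 0, d3:] - liftY [:n0, 0, 1, n3:] * liftX [:d0, 1, 0, d3:])
             div (varX - varY)
         = [:[:- d3:]:] * (varX * varY + [:[:A:]:] * varX + [:[:B:]:] * varY + [:[:C:]:])
             * (varX * varY + [:[:B:]:] * varX + [:[:A:]:] * varY + [:[:C:]:])"
  shows "factorization_coeffs n0 n3 d0 d3 A B C"
proof -
  have "[:[:- d3:]:] * (varX * varY + [:[:A:]:] * varX + [:[:B:]:] * varY + [:[:C:]:])
          * (varX * varY + [:[:B:]:] * varX + [:[:A:]:] * varY + [:[:C:]:])
      = [:[:- (d3 * C ^ 2), - d3 * (A + B) * C, - d3 * A * B:],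
          [:- d3 * (A + B) * C, - d3 * (2 * C + A ^ 2 + B ^ 2), - d3 * (A + B):],
          [:- d3 * A * B, - d3 * (A + B), - d3:]:]"
    by (simp add: varX_def varY_def algebra_simps power2_eq_square)
  with assms [unfolded cross_difference_div]
  have "[:[:- n0, d0, n3 * d0 - n0 * d3:], [:d0, n3 * d0 - n0 * d3 + 1, n3:],
          [:n3 * d0 - n0 * d3, n3, - d3:]:]
      = [:[:- (d3 * C ^ 2), - d3 * (A + B) * C, - d3 * A * B:],
          [:- d3 * (A + B) * C, - d3 * (2 * C + A ^ 2 + B ^ 2), - d3 * (A + B):],
          [:- d3 * A * B, - d3 * (A + B), - d3:]:]"
    by (rule trans)
  then show ?thesis
    unfolding factorization_coeffs_def pCons_eq_iff neg_equal_iff_equal by blast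
qed

lemma cross_difference_factorization:
  fixes x z :: "'k::field"
  assumes "factorization_coeffs n0 n3 d0 d3 A B C"
  shows "poly [:n0, 0, 1, n3:] x * poly [:d0, 1, 0, d3:] z - poly [:n0, 0, 1, n3:] z * poly [:d0, 1, 0, d3:] x
       = (x - z) * (- d3 * (x * z + A * x + B * z + C) * (x * z + B * x + A * z + C))"
proof -
  let ?e = "n3 * d0 - n0 * d3"
  from assms have n0: "n0 = d3 * C ^ 2" and d0: "d0 = - d3 * (A + B) * C" and n3: "n3 = - d3 * (A + B)"
    and e: "?e = - d3 * A * B" and e1: "- d3 * A * B + 1 = - d3 * (2 * C + A ^ 2 + B ^ 2)"
    unfolding factorization_coeffs_def by auto
  have "poly [:n0, 0, 1, n3:] x * poly [:d0, 1, 0, d3:] z - poly [:n0, 0, 1, n3:] z * poly [:d0, 1, 0, d3:] x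
      = (x - z) * (- n0 + d0 * (x + z) + ?e * (x ^ 2 + z ^ 2) + (?e + 1) * x * z
                   + n3 * x * z * (x + z) - d3 * x ^ 2 * z ^ 2)"
    by (simp add: algebra_simps power2_eq_square)
  also have "\<dots> = (x - z) * (- d3 * (x * z + A * x + B * z + C) * (x * z + B * x + A * z + C))"
    unfolding e e1 unfolding n0 d0 n3 by (simp add: algebra_simps power2_eq_square)
  finally show ?thesis .
qed

lemma factorization_coeffs_elim:
  fixes n0 n3 d0 d3 A B C :: "'k::field"
  assumes "factorization_coeffs n0 n3 d0 d3 A B C"
  shows "n0 * n3 ^ 2 = d3 * d0 ^ 2"
    and "3 * (n3 * d0 - n0 * d3) * n3 * d3 + n3 * d3 + 2 * d3 ^ 2 * d0 + n3 ^ 3 = 0"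
proof -
  from assms have n0: "n0 = d3 * C ^ 2" and d0: "d0 = n3 * C" and n3: "n3 = - d3 * (A + B)"
    and e: "n3 * d0 - n0 * d3 = - d3 * A * B" and e1: "- d3 * A * B + 1 = - d3 * (2 * C + A ^ 2 + B ^ 2)"
    unfolding factorization_coeffs_def by auto
  show "n0 * n3 ^ 2 = d3 * d0 ^ 2"
    unfolding n0 d0 by (simp add: algebra_simps power2_eq_square)
  have "3 * (n3 * d0 - n0 * d3) * n3 * d3 + n3 * d3 + 2 * d3 ^ 2 * d0 + n3 ^ 3
      = d3 ^ 2 * (A + B) * (3 * d3 * A * B - 1 - 2 * d3 * C - d3 * (A + B) ^ 2)"
    unfolding e unfolding d0 n3 by (simp add: algebra_simps power2_eq_square power3_eq_cube)
  also have "\<dots> = 0"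
    using e1 by (simp add: algebra_simps power2_eq_square)
  finally show "3 * (n3 * d0 - n0 * d3) * n3 * d3 + n3 * d3 + 2 * d3 ^ 2 * d0 + n3 ^ 3 = 0" .
qed

lemma F_ab_factorization_imp_relations:
  fixes a b :: "'a::field"
  assumes "F_ab q a b =
             [:[:- to_ac b:]:]
             * (varX * varY + [:[:A:]:] * varX + [:[:B:]:] * varY + [:[:C:]:])
             * (varX * varY + [:[:B:]:] * varX + [:[:A:]:] * varY + [:[:C:]:])"
  shows "b ^ q * (a ^ q) ^ 2 = b * a ^ 2"
    and "3 * (a ^ q * a - b ^ q * b) * a ^ q * b + a ^ q * b + 2 * b ^ 2 * a + (a ^ q) ^ 3 = 0"
proof -
  have "F_ab q a b =
          (liftX [:to_ac b ^ q, 0, 1, to_ac a ^ q:] * liftY [:to_ac a, 1, 0, to_ac b:]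
           - liftY [:to_ac b ^ q, 0, 1, to_ac a ^ q:] * liftX [:to_ac a, 1, 0, to_ac b:]) div (varX - varY)"
    by (simp add: F_ab_def Let_def N_ab_def D_ab_def map_poly_pCons)
  with assms have coeffs: "factorization_coeffs (to_ac b ^ q) (to_ac a ^ q) (to_ac a) (to_ac b) A B C"
    by (intro factorization_imp_coeffs) simp
  show "b ^ q * (a ^ q) ^ 2 = b * a ^ 2"
    using factorization_coeffs_elim(1)[OF coeffs] by (subst to_ac_eq_iff [symmetric]) simp
  show "3 * (a ^ q * a - b ^ q * b) * a ^ q * b + a ^ q * b + 2 * b ^ 2 * a + (a ^ q) ^ 3 = 0"
    using factorization_coeffs_elim(2)[OF coeffs] by (subst to_ac_eq_0_iff [symmetric]) simp
qed

lemma common_quadratic_factor: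
  fixes a n3 l :: "'k::field"
  assumes "a \<noteq> 0" and "n3 \<noteq> 0" and "l ^ 2 - l = n3 * a"
  shows "\<not> (\<forall>g. g dvd [:l * a / n3, 0, 1, n3:] \<and> g dvd [:a, 1, 0, l * n3 / a:] \<longrightarrow> degree g = 0)"
proof -
  have "l \<noteq> 1"
    using assms by auto
  let ?g = "[:1, (1 - l) / a, n3 / a:]"
  have "[:l * a / n3, 0, 1, n3:] = ?g * [:a ^ 2 / (l - 1), a:]"
    and "[:a, 1, 0, l * n3 / a:] = ?g * [:a, l:]"
    using assms \<open>l \<noteq> 1\<close> by (simp_all add: field_simps power2_eq_square)
  then have "?g dvd [:l * a / n3, 0, 1, n3:]" and "?g dvd [:a, 1, 0, l * n3 / a:]"
    by (metis dvd_triv_left)+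
  moreover have "degree ?g = 2"
    using assms by simp
  ultimately show ?thesis by auto
qed

text \<open>With \<open>l = ab/n3\<close>, the second relation factors as \<open>(3l + 1)(l^2 - l - n3 a) = 0\<close>,
  and \<open>l^2 - l = n3 a\<close> is excluded by \<open>common_quadratic_factor\<close>.\<close>
lemma coeff_relations_coprime_imp:
  fixes a b n0 n3 :: "'k::field"
  assumes a: "a \<noteq> 0" and n3: "n3 \<noteq> 0" and three: "(3::'k) \<noteq> 0"
    and rel1: "n0 * n3 ^ 2 = b * a ^ 2"
    and rel2: "3 * (n3 * a - n0 * b) * n3 * b + n3 * b + 2 * b ^ 2 * a + n3 ^ 3 = 0"
    and coprime: "\<forall>g. g dvd [:n0, 0, 1, n3:] \<and> g dvd [:a, 1, 0, b:] \<longrightarrow> degree g = 0"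
  shows "3 * a * b = - n3" and "9 * n3 * a \<noteq> 4"
proof -
  define l where "l = a * b / n3"
  have b_eq: "b = l * n3 / a" and n0_eq: "n0 = l * a / n3"
    using rel1 a n3 unfolding l_def by (simp_all add: field_simps power2_eq_square)
  have no_common_factor: "l ^ 2 - l \<noteq> n3 * a"
    using common_quadratic_factor[OF a n3] coprime unfolding b_eq n0_eq by blast
  have "(3 * l + 1) * (l ^ 2 - l - n3 * a) * (n3 ^ 2 / a) = 0"
    using rel2 a n3 unfolding b_eq n0_eq by (simp add: field_simps power2_eq_square power3_eq_cube)
  with a n3 no_common_factor have l: "3 * l + 1 = 0"
    by simp
  then have "n3 + a * (b * 3) = 0"
    using n3 unfolding l_def by (simp add: field_simps)
  then show "3 * a * b = - n3"
    by (simp add: algebra_simps eq_neg_iff_add_eq_0)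
  from l have "3 * l = - 1"
    by (simp add: eq_neg_iff_add_eq_0)
  have "9 * (l ^ 2 - l) = (3 * l) ^ 2 - 3 * (3 * l)"
    by (simp add: algebra_simps power2_eq_square)
  also have "\<dots> = 4"
    using \<open>3 * l = - 1\<close> by simp
  finally have nine_l: "9 * (l ^ 2 - l) = 4" .
  have "(9::'k) \<noteq> 0"
    using three power_eq_0_iff[of "3::'k" 2] by simp
  show "9 * n3 * a \<noteq> 4"
  proof
    assume "9 * n3 * a = 4"
    with nine_l have "9 * (l ^ 2 - l) = 9 * (n3 * a)"
      by (simp add: mult.assoc)
    with mult_left_cancel [OF \<open>(9::'k) \<noteq> 0\<close>] no_common_factor show False
      by blast
  qed
qed

lemma smooth_numerals_nonzero:
  assumes "(2::'k::field) \<noteq> 0" and "(3::'k) \<noteq> 0"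
  shows "(4::'k) \<noteq> 0" "(6::'k) \<noteq> 0" "(9::'k) \<noteq> 0" "(12::'k) \<noteq> 0" "(18::'k) \<noteq> 0"
    "(36::'k) \<noteq> 0" "(48::'k) \<noteq> 0" "(54::'k) \<noteq> 0"
proof -
  have "(4::'k) = 2 ^ 2" "(6::'k) = 2 * 3" "(9::'k) = 3 ^ 2" "(12::'k) = 2 ^ 2 * 3" "(18::'k) = 2 * 3 ^ 2"
    "(36::'k) = 2 ^ 2 * 3 ^ 2" "(48::'k) = 2 ^ 4 * 3" "(54::'k) = 2 * 3 ^ 3"
    by simp_all
  with assms show "(4::'k) \<noteq> 0" "(6::'k) \<noteq> 0" "(9::'k) \<noteq> 0" "(12::'k) \<noteq> 0"
    "(18::'k) \<noteq> 0" "(36::'k) \<noteq> 0" "(48::'k) \<noteq> 0" "(54::'k) \<noteq> 0"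
    by (simp_all only: mult_eq_0_iff power_eq_0_iff) simp_all
qed

lemma factorization_coeffs_explicit:
  fixes a n3 s :: "'k::field"
  assumes a: "a \<noteq> 0" and n3: "n3 \<noteq> 0" and two: "(2::'k) \<noteq> 0" and three: "(3::'k) \<noteq> 0"
    and s: "3 * n3 * a * s ^ 2 = 4 - 9 * n3 * a"
  shows "factorization_coeffs (- a / (3 * n3)) n3 a (- n3 / (3 * a))
           (a * (3 + s) / 2) (a * (3 - s) / 2) (a / n3)"
proof -
  note nz = smooth_numerals_nonzero[OF two three]
  define n0 b A B C where "n0 = - a / (3 * n3)" and "b = - n3 / (3 * a)"
    and "A = a * (3 + s) / 2" and "B = a * (3 - s) / 2" and "C = a / n3"
  have ts: "n3 * a * s ^ 2 = (4 - 9 * n3 * a) / 3"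
    using s three by (simp add: field_simps)
  have "- b * A * B = (9 * (n3 * a) - n3 * a * s ^ 2) / 12"
    unfolding b_def A_def B_def using a two three nz by (simp add: field_simps power2_eq_square)
  also have "\<dots> = (9 * (n3 * a) - (4 - 9 * n3 * a) / 3) / 12"
    unfolding ts ..
  also have "\<dots> = n3 * a - n0 * b"
    unfolding n0_def b_def using a n3 three nz by (simp add: field_simps)
  finally have rel4: "n3 * a - n0 * b = - b * A * B" ..
  have "- b * (2 * C + A ^ 2 + B ^ 2) = 2 / 3 + (9 * (n3 * a) + n3 * a * s ^ 2) / 6"
    unfolding b_def A_def B_def C_def using a n3 two three nz by (simp add: field_simps power2_eq_square)
  also have "\<dots> = 2 / 3 + (9 * (n3 * a) + (4 - 9 * n3 * a) / 3) / 6"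
    unfolding ts ..
  also have "\<dots> = n3 * a - n0 * b + 1"
    unfolding n0_def b_def using a n3 two three nz by (simp add: field_simps)
  finally have rel5: "n3 * a - n0 * b + 1 = - b * (2 * C + A ^ 2 + B ^ 2)" ..
  have "n0 = b * C ^ 2" and "a = - b * (A + B) * C" and "n3 = - b * (A + B)"
    unfolding n0_def b_def A_def B_def C_def using a n3 two three nz
    by (simp_all add: field_simps power2_eq_square)
  with rel4 rel5 show ?thesis
    unfolding factorization_coeffs_def n0_def [symmetric] b_def [symmetric] A_def [symmetric]
      B_def [symmetric] C_def [symmetric]
    by blast
qed

section \<open>Fields of order \<open>q^2\<close>\<close>

locale quadratic_finite_field =
  fixes p h q :: nat and field_type :: "'a::{field,finite} itself"
  assumes prime_p: "prime p" and p_gt_3: "p > 3" and q_eq: "q = p ^ h"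
    and card_UNIV: "card (UNIV :: 'a set) = q ^ 2"
begin

lemma CHAR_eq: "CHAR('a) = p"
proof -
  have "prime CHAR('a)"
    by (rule prime_CHAR_semidom) (simp add: finite_imp_CHAR_pos)
  moreover have "of_nat (p ^ (h * 2)) = (0 :: 'a)"
    using of_nat_card_UNIV_eq_0[where 'a = 'a] card_UNIV q_eq by (simp add: power_mult)
  then have "CHAR('a) dvd p ^ (h * 2)"
    by (simp only: of_nat_eq_0_iff_char_dvd)
  ultimately show ?thesis
    using prime_p prime_dvd_power primes_dvd_imp_eq by blast
qed

lemma two_nonzero [simp]: "(2::'a) \<noteq> 0"
  and three_nonzero [simp]: "(3::'a) \<noteq> 0"
  using of_nat_eq_0_iff_char_dvd[of 2, where 'a = 'a] of_nat_eq_0_iff_char_dvd[of 3, where 'a = 'a]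
    p_gt_3 CHAR_eq by (auto dest: dvd_imp_le)

lemma q_ge_5: "q \<ge> 5"
proof -
  have "h \<noteq> 0"
  proof
    assume "h = 0"
    then have "card (UNIV :: 'a set) = 1"
      using card_UNIV q_eq by simp
    then show False
      by (metis card_1_singletonE UNIV_I singletonD zero_neq_one)
  qed
  then have "p ^ 1 \<le> q"
    unfolding q_eq using p_gt_3 by (intro power_increasing) auto
  moreover have "p \<noteq> 4"
  proof
    assume "p = 4"
    with prime_p have "prime (2 * 2 :: nat)" by simp
    then show False by (auto dest: prime_product)
  qed
  ultimately show ?thesis
    using p_gt_3 by simp
qed

lemma odd_q: "odd q"
  using prime_p p_gt_3 q_eq prime_odd_nat by simp

lemma frobenius_add: "(u + v) ^ q = u ^ q + (v ^ q :: 'a)"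
  using freshmans_dream'[of q h u v] prime_p CHAR_eq q_eq by simp

lemma frobenius_minus: "(- u) ^ q = - (u ^ q :: 'a)"
  using odd_q by simp

lemma frobenius_diff: "(u - v) ^ q = u ^ q - (v ^ q :: 'a)"
  using frobenius_add[of u "- v"] frobenius_minus[of v] by simp

lemma frobenius_of_nat: "(of_nat n :: 'a) ^ q = of_nat n"
proof (induction n)
  case 0
  then show ?case using q_ge_5 by simp
next
  case (Suc n)
  then show ?case using frobenius_add[of 1 "of_nat n"] by (simp add: add.commute)
qed

lemma frobenius_numeral: "(numeral n :: 'a) ^ q = numeral n"
  using frobenius_of_nat[of "numeral n"] by simp

lemma power_q_squared: "(u :: 'a) ^ q ^ 2 = u"
  using power_card_UNIV_eq_self [of u] card_UNIV by simp

lemma frobenius_involution: "(u ^ q) ^ q = (u :: 'a)"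
  using power_q_squared [of u] by (simp add: power_mult power2_eq_square)

lemma power_q_eq: "(u :: 'a) ^ q = u * u ^ (q - 1)"
  using q_ge_5 by (cases q) auto

lemma square_root_exists:
  assumes "u ^ q = (u :: 'a)"
  shows "\<exists>s. s ^ 2 = u"
proof (cases "u = 0")
  case False
  define m where "m = (q - 1) * ((q + 1) div 2)"
  have "q ^ 2 = Suc (2 * m)"
    using odd_q unfolding m_def by (elim oddE) (simp add: algebra_simps power2_eq_square)
  then have squares: "(\<lambda>x. x ^ 2) ` (UNIV - {0}) = {x :: 'a. x ^ m = 1}"
    using card_UNIV by (intro nonzero_squares_eq_roots_of_unity) simp
  have "u * u ^ (q - 1) = u * 1"
    using assms power_q_eq by simp
  with False have "u ^ m = 1"
    unfolding m_def by (simp add: power_mult)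
  with squares show ?thesis
    by (metis (mono_tags, lifting) image_iff mem_Collect_eq)
qed simp

lemma unit_circle_conj:
  assumes "y ^ (q + 1) = (1 :: 'a)"
  shows "y ^ q = 1 / y" and "y \<noteq> 0"
proof -
  show "y \<noteq> 0"
    using assms by auto
  then show "y ^ q = 1 / y"
    using assms by (simp add: eq_divide_eq mult.commute)
qed

lemma unit_circle_power_q_minus_1:
  assumes "x \<noteq> (0 :: 'a)"
  shows "(x ^ (q - 1)) ^ (q + 1) = 1"
proof -
  have "x * (x ^ (q - 1)) ^ (q + 1) = x ^ q ^ 2"
    using q_ge_5 by (simp add: power2_eq_square algebra_simps flip: power_mult power_Suc)
  also have "\<dots> = x * 1"
    using power_q_squared by simp
  finally show ?thesis
    using assms by simp
qed

lemma poly_f_ab: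
  assumes "x \<noteq> (0 :: 'a)"
  shows "poly (f_ab q a b) x = x * poly (D_ab a b) (x ^ (q - 1)) / x ^ (q - 1)"
proof -
  define y where "y = x ^ (q - 1)"
  have "y ^ (q + 1) = 1"
    unfolding y_def using assms by (rule unit_circle_power_q_minus_1)
  note y = unit_circle_conj [OF this]
  have "x ^ (q * (q - 1)) = y ^ q" and "x ^ (2 * (q - 1)) = y ^ 2"
    unfolding y_def by (simp_all add: mult.commute flip: power_mult)
  then have "poly (f_ab q a b) x = x * (1 + a * y ^ q + b * y ^ 2)"
    by (simp add: f_ab_def poly_monom)
  also have "\<dots> = x * poly (D_ab a b) y / y"
    using y by (simp add: poly_D_ab field_simps power2_eq_square power3_eq_cube)
  finally show ?thesis
    unfolding y_def .
qed

lemma D_ab_conj: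
  assumes "y ^ (q + 1) = (1 :: 'a)"
  shows "poly (D_ab a b) y ^ q = poly (N_ab q a b) y / y ^ 3"
proof -
  note y = unit_circle_conj [OF assms]
  have "poly (D_ab a b) y ^ q = b ^ q * (y ^ q) ^ 3 + y ^ q + a ^ q"
    by (simp add: poly_D_ab frobenius_add power_mult_distrib mult.commute[of 3 q] flip: power_mult)
  also have "\<dots> = poly (N_ab q a b) y / y ^ 3"
    unfolding y(1) using y(2) by (simp add: poly_N_ab field_simps power2_eq_square power3_eq_cube)
  finally show ?thesis .
qed

text \<open>The witness is \<open>x' = x (D(y)/y) / (D(y')/y')\<close>, using \<open>D(z)^q = N(z)/z^3\<close> on \<open>\<mu>\<^sub>q\<^sub>+\<^sub>1\<close>.\<close>
lemma exists_f_ab_collision_over: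
  fixes a b x y' :: 'a
  defines "N \<equiv> poly (N_ab q a b)" and "D \<equiv> poly (D_ab a b)"
  assumes x: "x \<noteq> 0" and y': "y' ^ (q + 1) = 1"
    and cross: "N (x ^ (q - 1)) * D y' = N y' * D (x ^ (q - 1))"
    and nonzero: "N (x ^ (q - 1)) \<noteq> 0" "D (x ^ (q - 1)) \<noteq> 0" "N y' \<noteq> 0" "D y' \<noteq> 0"
  obtains x' where "x' ^ (q - 1) = y'" and "poly (f_ab q a b) x' = poly (f_ab q a b) x"
proof -
  define y where "y = x ^ (q - 1)"
  have y: "y ^ (q + 1) = 1"
    unfolding y_def using x by (rule unit_circle_power_q_minus_1)
  note y_conj = unit_circle_conj [OF y] and y'_conj = unit_circle_conj [OF y']
  note nonzero = nonzero [folded y_def]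
  define x' where "x' = x * (D y / y) / (D y' / y')"
  have x': "x' \<noteq> 0"
    unfolding x'_def using x nonzero y_conj y'_conj by simp
  have "x' ^ (q - 1) = x' ^ q / x'"
    using power_q_eq [of x'] x' by simp
  also have "\<dots> = x * y * (N y / y ^ 3 / y ^ q) / (N y' / y' ^ 3 / y' ^ q) / x'"
    unfolding x'_def using power_q_eq [of x] D_ab_conj [OF y] D_ab_conj [OF y']
    by (simp add: power_mult_distrib power_divide N_def D_def y_def)
  also have "\<dots> = y' * (N y * D y') / (N y' * D y)"
    unfolding x'_def y_conj y'_conj using x y_conj y'_conj nonzero
    by (simp add: field_simps power2_eq_square power3_eq_cube)
  also have "\<dots> = y'"
    using cross nonzero unfolding y_def by simp
  finally have x'_y': "x' ^ (q - 1) = y'" .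
  moreover have "poly (f_ab q a b) x' = poly (f_ab q a b) x"
    unfolding poly_f_ab [OF x] poly_f_ab [OF x'] x'_y' using y_conj y'_conj nonzero
    by (simp add: x'_def y_def D_def)
  ultimately show thesis
    by (rule that)
qed

lemma not_inj_f_ab_if_collision:
  fixes a b x y' :: 'a
  assumes x: "x \<noteq> 0" and y': "y' ^ (q + 1) = 1" and neq: "x ^ (q - 1) \<noteq> y'"
    and cross: "poly (N_ab q a b) (x ^ (q - 1)) * poly (D_ab a b) y'
              = poly (N_ab q a b) y' * poly (D_ab a b) (x ^ (q - 1))"
    and coprime: "\<forall>g. g dvd N_ab q a b \<and> g dvd D_ab a b \<longrightarrow> degree g = 0"
  shows "\<not> inj (poly (f_ab q a b))"
proof
  assume inj: "inj (poly (f_ab q a b))"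
  define y where "y = x ^ (q - 1)"
  define N D where "N = poly (N_ab q a b)" and "D = poly (D_ab a b)"
  have cross: "N y * D y' = N y' * D y"
    using cross unfolding N_def D_def y_def .
  have no_common_root: "N z = 0 \<Longrightarrow> D z \<noteq> 0" for z
    using no_common_root_if_coprime [OF coprime] unfolding N_def D_def by blast
  have Dy: "D y \<noteq> 0"
  proof
    assume "D y = 0"
    then have "poly (f_ab q a b) x = poly (f_ab q a b) 0"
      using poly_f_ab [OF x] by (simp add: y_def D_def f_ab_def)
    with inj x show False
      by (auto dest: injD)
  qed
  have Dy': "D y' \<noteq> 0"
    using cross Dy no_common_root by force
  have Ny': "N y' \<noteq> 0"
  proof
    assume "N y' = 0"
    with cross Dy' have "N y = 0"
      by simp
    then have "D y ^ q = 0"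
      using D_ab_conj [OF unit_circle_power_q_minus_1 [OF x]] unfolding N_def D_def y_def by simp
    with Dy show False by simp
  qed
  have Ny: "N y \<noteq> 0"
    using cross Dy Ny' by auto
  obtain x' where "x' ^ (q - 1) = y'" and "poly (f_ab q a b) x' = poly (f_ab q a b) x"
    using exists_f_ab_collision_over [OF x y'] cross Ny Dy Ny' Dy' unfolding N_def D_def y_def
    by blast
  with inj neq show False
    by (auto dest: injD)
qed

lemma mobius_maps_unit_circle:
  fixes A B C y :: 'a
  assumes C: "C ^ (q + 1) = 1" and B: "B = C * A ^ q"
    and y: "y ^ (q + 1) = 1" and yB: "y + B \<noteq> 0"
  shows "(- (A * y + C) / (y + B)) ^ (q + 1) = 1"
proof -
  note y_conj = unit_circle_conj [OF y]
  have Bq: "B ^ q = C ^ q * A"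
    unfolding B by (simp add: power_mult_distrib frobenius_involution)
  have CqC: "C ^ q * C = 1"
    using C by (simp add: mult.commute)
  have "(y + B) ^ q \<noteq> 0"
    using yB by simp
  then have den: "1 / y + C ^ q * A \<noteq> 0"
    unfolding frobenius_add y_conj(1) Bq .
  have conj: "(- (A * y + C) / (y + B)) ^ q = - (A ^ q / y + C ^ q) / (1 / y + C ^ q * A)"
    by (simp add: power_divide frobenius_add frobenius_minus frobenius_diff power_mult_distrib
        y_conj(1) Bq)
  have "(- (A * y + C) / (y + B)) ^ (q + 1) = (- (A * y + C) / (y + B)) ^ q * (- (A * y + C) / (y + B))"
    by simp
  also have "\<dots> = (A ^ q / y + C ^ q) * (A * y + C) / ((1 / y + C ^ q * A) * (y + B))"
    unfolding conj
    by (simp only: minus_divide_left [symmetric] mult_minus_left mult_minus_right minus_minus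
        times_divide_times_eq)
  also have "(A ^ q / y + C ^ q) * (A * y + C) = (1 / y + C ^ q * A) * (y + B)"
    unfolding B using y_conj(2) CqC by (simp add: field_simps)
  finally show ?thesis
    using den yB by simp
qed

lemma exists_nonroot_of_power_q_minus_1:
  fixes P :: "'a poly"
  assumes "P \<noteq> 0" and "degree P \<le> q"
  obtains x where "x \<noteq> 0" and "poly P (x ^ (q - 1)) \<noteq> 0"
proof -
  define Q where "Q = P \<circ>\<^sub>p monom 1 (q - 1)"
  have "Q \<noteq> 0"
    unfolding Q_def using assms(1) q_ge_5 by (simp add: pcompose_eq_0_iff degree_monom_eq)
  moreover have "degree Q \<le> q * (q - 1)"
    unfolding Q_def using assms(2) by (simp add: degree_pcompose degree_monom_eq)
  ultimately have "card {x. poly Q x = 0} \<le> q * (q - 1)"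
    using card_poly_roots_bound [of Q] by linarith
  moreover have "q * (q - 1) + 1 < q ^ 2"
    using q_ge_5 by (cases q) (simp_all add: power2_eq_square)
  ultimately have "card ({x. poly Q x = 0} \<union> {0}) < card (UNIV :: 'a set)"
    using card_Un_le [of "{x. poly Q x = 0}" "{0}"] card_UNIV by simp
  then obtain x where "x \<notin> {x. poly Q x = 0} \<union> {0}"
    by (metis UNIV_I card_mono finite not_le subsetI)
  with that show thesis
    unfolding Q_def by (auto simp: poly_pcompose poly_monom)
qed

lemma not_inj_f_ab_if_mobius:
  fixes a b A B C :: 'a
  assumes coeffs: "factorization_coeffs (b ^ q) (a ^ q) a b A B C"
    and C: "C ^ (q + 1) = 1" and B: "B = C * A ^ q"
    and coprime: "\<forall>g. g dvd N_ab q a b \<and> g dvd D_ab a b \<longrightarrow> degree g = 0"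
  shows "\<not> inj (poly (f_ab q a b))"
proof -
  define P where "P = [:B, 1:] * [:C, A + B, 1:]"
  have "P \<noteq> 0" and "degree P \<le> q"
    unfolding P_def using q_ge_5 by (simp_all add: degree_mult_eq)
  then obtain x where x: "x \<noteq> 0" and Px: "poly P (x ^ (q - 1)) \<noteq> 0"
    by (rule exists_nonroot_of_power_q_minus_1)
  define y where "y = x ^ (q - 1)"
  define y' where "y' = - (A * y + C) / (y + B)"
  have "poly P y = (y + B) * (y ^ 2 + (A + B) * y + C)"
    unfolding P_def by (simp add: algebra_simps power2_eq_square)
  with Px have yB: "y + B \<noteq> 0" and y_fixed: "y ^ 2 + (A + B) * y + C \<noteq> 0"
    unfolding y_def by simp_all
  have y: "y ^ (q + 1) = 1"
    unfolding y_def using x by (rule unit_circle_power_q_minus_1)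
  have "y' * (y + B) = - (A * y + C)"
    unfolding y'_def using yB by simp
  then have factor: "y * y' + A * y + B * y' + C = 0"
    by (simp add: algebra_simps)
  have "y \<noteq> y'"
  proof
    assume "y = y'"
    with factor have "y ^ 2 + (A + B) * y + C = 0"
      by (simp add: algebra_simps power2_eq_square)
    with y_fixed show False ..
  qed
  moreover have "poly (N_ab q a b) y * poly (D_ab a b) y' = poly (N_ab q a b) y' * poly (D_ab a b) y"
    using cross_difference_factorization [OF coeffs, of y y'] factor
    by (simp add: N_ab_def D_ab_def)
  ultimately show ?thesis
    using not_inj_f_ab_if_collision [OF x _ _ _ coprime] mobius_maps_unit_circle [OF C B y yB]
    unfolding y_def y'_def by blast
qed

lemma nonsquare_imp_anti_invariant_sqrt:
  fixes t :: 'a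
  assumes t: "t \<noteq> 0" "t ^ q = t"
    and nonsquare: "\<not> (\<exists>y. y ^ q = y \<and> y ^ 2 = 3 * t * (4 - 9 * t))"
  obtains s where "3 * t * s ^ 2 = 4 - 9 * t" and "s ^ q = - s"
proof -
  define d where "d = (4 - 9 * t) / (3 * t)"
  have "d ^ q = d"
    unfolding d_def by (simp add: power_divide frobenius_diff power_mult_distrib frobenius_numeral t)
  then obtain s where s: "s ^ 2 = d"
    using square_root_exists by blast
  have "(s ^ q) ^ 2 = (s ^ 2) ^ q"
    by (metis power_mult mult.commute)
  also have "\<dots> = s ^ 2"
    using s \<open>d ^ q = d\<close> by simp
  finally have "s ^ q = s \<or> s ^ q = - s"
    by (simp add: power2_eq_iff)
  moreover have s_eq: "3 * t * s ^ 2 = 4 - 9 * t"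
    using s t unfolding d_def by simp
  moreover have "s ^ q \<noteq> s"
  proof
    assume "s ^ q = s"
    then have "(3 * t * s) ^ q = 3 * t * s"
      by (simp add: power_mult_distrib frobenius_numeral t)
    moreover have "(3 * t * s) ^ 2 = 3 * t * (3 * t * s ^ 2)"
      by (simp add: power2_eq_square algebra_simps)
    ultimately show False
      using nonsquare unfolding s_eq by blast
  qed
  ultimately show thesis
    using that by blast
qed

lemma square_if_inj_f_ab:
  fixes a b :: 'a
  assumes a: "a \<noteq> 0" and t: "9 * a ^ (q + 1) \<noteq> 4" and b: "3 * a * b = - (a ^ q)"
    and coprime: "\<forall>g. g dvd N_ab q a b \<and> g dvd D_ab a b \<longrightarrow> degree g = 0"
    and inj: "inj (poly (f_ab q a b))"
  shows "\<exists>y. y ^ q = y \<and> y ^ 2 = 3 * a ^ (q + 1) * (4 - 9 * a ^ (q + 1))"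
proof (rule ccontr)
  assume nonsquare: "\<not> ?thesis"
  have a_q: "a ^ q \<noteq> 0" and a_qq: "(a ^ q) ^ q = a"
    using a frobenius_involution by simp_all
  have "a ^ (q + 1) \<noteq> 0" and "(a ^ (q + 1)) ^ q = a ^ (q + 1)"
    using a by (simp_all add: power_add power_mult_distrib a_qq mult.commute)
  then obtain s where s: "3 * a ^ (q + 1) * s ^ 2 = 4 - 9 * a ^ (q + 1)" and s_q: "s ^ q = - s"
    using nonsquare_imp_anti_invariant_sqrt nonsquare by blast
  define A B C where "A = a * (3 + s) / 2" and "B = a * (3 - s) / 2" and "C = a / a ^ q"
  have b_eq: "b = - (a ^ q) / (3 * a)"
    using b a by (simp add: field_simps)
  then have b_q: "b ^ q = - a / (3 * a ^ q)"
    by (simp add: power_divide frobenius_minus power_mult_distrib frobenius_numeral a_qq)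
  have "3 * a ^ q * a * s ^ 2 = 4 - 9 * a ^ q * a"
    using s by (simp add: mult_ac)
  then have "factorization_coeffs (b ^ q) (a ^ q) a b A B C"
    unfolding b_q unfolding b_eq A_def B_def C_def
    by (rule factorization_coeffs_explicit [OF a a_q two_nonzero three_nonzero])
  moreover have "C ^ (q + 1) = 1"
    unfolding C_def using a a_q by (simp add: power_divide a_qq)
  moreover have "B = C * A ^ q"
    unfolding A_def B_def C_def using a_q
    by (simp add: power_divide power_mult_distrib frobenius_add frobenius_numeral s_q)
  ultimately show False
    using not_inj_f_ab_if_mobius coprime inj by blast
qed

end

theorem mainTheorem10:
  fixes p h q :: nat and a b :: "'a::{field, finite}"
  assumes "prime p" and "p > 3" and "q = p ^ h"
    and "card (UNIV :: 'a set) = q ^ 2"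
    and "a \<noteq> 0" and "b \<noteq> 0"
    and "perm_poly (f_ab q a b)"
    and "\<forall>g. g dvd N_ab q a b \<and> g dvd D_ab a b \<longrightarrow> degree g = 0"
    and "\<exists>A B C :: 'a alg_closure.
           F_ab q a b =
             [:[:- to_ac b:]:]
             * (varX * varY + [:[:A:]:] * varX + [:[:B:]:] * varY + [:[:C:]:])
             * (varX * varY + [:[:B:]:] * varX + [:[:A:]:] * varY + [:[:C:]:])"
  shows "b = - (a ^ (q - 1)) / 3
         \<and> 3 * a ^ (q + 1) * (4 - 9 * a ^ (q + 1)) \<in> nonzero_squares_q q"
proof -
  interpret quadratic_finite_field p h q "TYPE('a)"
    by unfold_locales (fact assms)+
  from assms(9) obtain A B C where "F_ab q a b =
             [:[:- to_ac b:]:]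
             * (varX * varY + [:[:A:]:] * varX + [:[:B:]:] * varY + [:[:C:]:])
             * (varX * varY + [:[:B:]:] * varX + [:[:A:]:] * varY + [:[:C:]:])"
    by blast
  note relations = F_ab_factorization_imp_relations [OF this]
  have "a ^ q \<noteq> 0"
    using assms(5) by simp
  note b_and_t = coeff_relations_coprime_imp [OF assms(5) this three_nonzero relations
      assms(8) [unfolded N_ab_def D_ab_def]]
  have "a * (3 * b) = a * - (a ^ (q - 1))"
    using b_and_t(1) power_q_eq [of a] by (simp add: algebra_simps)
  then have "3 * b = - (a ^ (q - 1))"
    using mult_left_cancel [OF assms(5)] by blast
  then have "b = - (a ^ (q - 1)) / 3"
    by (simp add: field_simps)
  moreover have "9 * a ^ (q + 1) \<noteq> 4"
    using b_and_t(2) by (simp add: mult_ac)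
  then obtain y where "y ^ q = y" and "y ^ 2 = 3 * a ^ (q + 1) * (4 - 9 * a ^ (q + 1))"
    using square_if_inj_f_ab [OF assms(5) _ b_and_t(1) assms(8)] assms(7)
    by (auto simp: perm_poly_def bij_is_inj)
  moreover have "3 * a ^ (q + 1) * (4 - 9 * a ^ (q + 1)) \<noteq> 0"
    using assms(5) \<open>9 * a ^ (q + 1) \<noteq> 4\<close> by simp
  ultimately show ?thesis
    unfolding nonzero_squares_q_def by auto
qed

end
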